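(* Let $w\in W$ and $\alpha\in\Phi^+$ with $s_\alpha w>w$ and $\ell(s_\alpha w)=\ell(w)+1$. Then, counted with multiplicity, the residues modulo the ideal $\langle\alpha\rangle$ of $\mathbb{C}[\alpha_1,\ldots,\alpha_r]$ of the elements of $\mathrm{Inv}(s_\alpha w)$ coincide with the residues of $\{\alpha\}\cup s_\alpha\,\mathrm{Inv}(w)$. That is, $\mathrm{Inv}(s_\alpha w)=\{\alpha\}\cup s_\alpha\mathrm{Inv}(w)\bmod(\alpha)$ with multiplicity.
   Context: $G$ is a complex reductive linear algebraic group, $B$ is a Borel subgroup, $T\subseteq B$ is a maximal torus, and $W=N(T)/T$ is the Weyl group, with root system $\Phi=\Phi^+\sqcup\Phi^-$ and simple roots $\alpha_1,\ldots,\alpha_r$. Roots are viewed as linear forms in $\mathbb{C}[\alpha_1,\ldots,\alpha_r]$. $s_\alpha$ is the reflection associated to $\alpha\in\Phi^+$, $\ell$ is the length function, and $\le$ is the Bruhat order. The inversion set is $\mathrm{Inv}(w)=\Phi^+\cap w\Phi^-$. *)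

theory Defs
  imports "HOL-Analysis.Analysis" "HOL-Library.Multiset"
begin

definition rrefl :: "'a::real_inner \<Rightarrow> 'a \<Rightarrow> 'a" where
  "rrefl \<alpha> v = v - (2 * (v \<bullet> \<alpha>) / (\<alpha> \<bullet> \<alpha>)) *\<^sub>R \<alpha>"

definition root_system :: "'a::euclidean_space set \<Rightarrow> bool" where
  "root_system \<Phi> \<longleftrightarrow> finite \<Phi> \<and> 0 \<notin> \<Phi>
     \<and> (\<forall>\<alpha>\<in>\<Phi>. rrefl \<alpha> ` \<Phi> = \<Phi>)
     \<and> (\<forall>\<alpha>\<in>\<Phi>. \<forall>\<beta>\<in>\<Phi>. 2 * (\<beta> \<bullet> \<alpha>) / (\<alpha> \<bullet> \<alpha>) \<in> \<int>)
     \<and> (\<forall>\<alpha>\<in>\<Phi>. \<forall>c::real. c *\<^sub>R \<alpha> \<in> \<Phi> \<longrightarrow> c = 1 \<or> c = -1)"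

definition simple_system :: "'a::euclidean_space set \<Rightarrow> 'a set \<Rightarrow> bool" where
  "simple_system \<Phi> \<Delta> \<longleftrightarrow> \<Delta> \<subseteq> \<Phi> \<and> independent \<Delta>
     \<and> (\<forall>\<beta>\<in>\<Phi>. \<exists>c::'a \<Rightarrow> real. (\<forall>\<delta>\<in>\<Delta>. c \<delta> \<in> \<int>)
            \<and> \<beta> = (\<Sum>\<delta>\<in>\<Delta>. c \<delta> *\<^sub>R \<delta>)
            \<and> ((\<forall>\<delta>\<in>\<Delta>. c \<delta> \<ge> 0) \<or> (\<forall>\<delta>\<in>\<Delta>. c \<delta> \<le> 0)))"

definition positive_roots :: "'a::euclidean_space set \<Rightarrow> 'a set \<Rightarrow> 'a set" where
  "positive_roots \<Phi> \<Delta> = {\<beta>\<in>\<Phi>. \<exists>c::'a \<Rightarrow> real. (\<forall>\<delta>\<in>\<Delta>. c \<delta> \<ge> 0)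
            \<and> \<beta> = (\<Sum>\<delta>\<in>\<Delta>. c \<delta> *\<^sub>R \<delta>)}"

definition negative_roots :: "'a::euclidean_space set \<Rightarrow> 'a set \<Rightarrow> 'a set" where
  "negative_roots \<Phi> \<Delta> = uminus ` positive_roots \<Phi> \<Delta>"

inductive_set weyl_group :: "'a::euclidean_space set \<Rightarrow> ('a \<Rightarrow> 'a) set" for \<Phi> where
  weyl_id: "id \<in> weyl_group \<Phi>"
| weyl_step: "\<alpha> \<in> \<Phi> \<Longrightarrow> w \<in> weyl_group \<Phi> \<Longrightarrow> rrefl \<alpha> \<circ> w \<in> weyl_group \<Phi>"

definition wlen :: "'a::euclidean_space set \<Rightarrow> ('a \<Rightarrow> 'a) \<Rightarrow> nat" where
  "wlen \<Delta> w = (LEAST n. \<exists>ds. length ds = n \<and> set ds \<subseteq> \<Delta>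
                         \<and> w = foldr (\<lambda>\<delta> f. rrefl \<delta> \<circ> f) ds id)"

definition bruhat_le :: "'a::euclidean_space set \<Rightarrow> 'a set \<Rightarrow> ('a \<Rightarrow> 'a) \<Rightarrow> ('a \<Rightarrow> 'a) \<Rightarrow> bool" where
  "bruhat_le \<Phi> \<Delta> x y \<longleftrightarrow>
     (x, y) \<in> {(u, rrefl \<beta> \<circ> u) | u \<beta>. u \<in> weyl_group \<Phi> \<and> \<beta> \<in> positive_roots \<Phi> \<Delta>
                  \<and> wlen \<Delta> u < wlen \<Delta> (rrefl \<beta> \<circ> u)}\<^sup>*"

definition bruhat_less :: "'a::euclidean_space set \<Rightarrow> 'a set \<Rightarrow> ('a \<Rightarrow> 'a) \<Rightarrow> ('a \<Rightarrow> 'a) \<Rightarrow> bool" where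
  "bruhat_less \<Phi> \<Delta> x y \<longleftrightarrow> bruhat_le \<Phi> \<Delta> x y \<and> x \<noteq> y"

definition inv_set :: "'a::euclidean_space set \<Rightarrow> 'a set \<Rightarrow> ('a \<Rightarrow> 'a) \<Rightarrow> 'a set" where
  "inv_set \<Phi> \<Delta> w = positive_roots \<Phi> \<Delta> \<inter> w ` negative_roots \<Phi> \<Delta>"

text \<open>Residue of a linear form beta modulo the ideal generated by the linear form alpha:
  two linear forms are congruent iff their difference is a scalar multiple of alpha.\<close>
definition residue :: "'a::real_vector \<Rightarrow> 'a \<Rightarrow> 'a set" where
  "residue \<alpha> \<beta> = {\<beta> + c *\<^sub>R \<alpha> | c. True}"

end

(*
  Residues modulo alpha are invariant under s_alpha, because s_alpha beta lies on the line
  beta + R alpha. The length with respect to the simple reflections equals the number of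
  inversions (via the strong exchange property), so the length hypothesis forces
  w^-1 alpha > 0: otherwise the same argument applied to s_alpha w would make the count
  go up twice. Given w^-1 alpha > 0, the map sending beta to s_alpha beta when that root is
  positive and to beta otherwise maps {alpha} u Inv(w) injectively into Inv(s_alpha w),
  preserving residues. Both sides have l(w) + 1 elements, so it is a bijection.
*)
theory Submission
  imports Defs
begin

lemma rrefl_rrefl [simp]: "a \<noteq> 0 \<Longrightarrow> rrefl a (rrefl a v) = v"
  by (simp add: rrefl_def algebra_simps)

lemma rrefl_self [simp]: "a \<noteq> 0 \<Longrightarrow> rrefl a a = - a"
  by (simp add: rrefl_def algebra_simps scaleR_2)

lemma rrefl_uminus_root [simp]: "rrefl (- a) = rrefl a"
  by (rule ext) (simp add: rrefl_def)

lemma linear_rrefl: "linear (rrefl a)"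
  unfolding rrefl_def
  by (rule linearI) (auto simp: algebra_simps add_divide_distrib)

lemma inj_rrefl: "a \<noteq> 0 \<Longrightarrow> inj (rrefl a)"
  by (metis injI rrefl_rrefl)

lemma inner_rrefl_rrefl: "rrefl a u \<bullet> rrefl a v = u \<bullet> v"
  by (cases "a = 0") (auto simp: rrefl_def algebra_simps inner_commute)

lemma rrefl_rrefl_conj:
  assumes "a \<noteq> 0"
  shows "rrefl (rrefl a b) \<circ> rrefl a = rrefl a \<circ> rrefl b"
proof
  fix v
  have "rrefl (rrefl a b) (rrefl a v)
      = rrefl a v - (2 * (v \<bullet> b) / (b \<bullet> b)) *\<^sub>R rrefl a b"
    by (simp add: rrefl_def[of "rrefl a b"] inner_rrefl_rrefl)
  also have "\<dots> = rrefl a (rrefl b v)"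
    using linear_rrefl[of a] by (simp add: rrefl_def[of b] linear_diff linear_scale)
  finally show "(rrefl (rrefl a b) \<circ> rrefl a) v = (rrefl a \<circ> rrefl b) v" by simp
qed

lemma rrefl_mem_image_iff: "a \<noteq> 0 \<Longrightarrow> b \<in> rrefl a ` X \<longleftrightarrow> rrefl a b \<in> X"
  by (metis image_iff rrefl_rrefl)

lemma rrefl_mem_image_comp_iff:
  "a \<noteq> 0 \<Longrightarrow> b \<in> (rrefl a \<circ> w) ` X \<longleftrightarrow> rrefl a b \<in> w ` X"
  unfolding image_comp[symmetric] by (rule rrefl_mem_image_iff)

lemma residue_add_scaleR [simp]: "residue a (b + c *\<^sub>R a) = residue a b"
proof -
  have "b + c *\<^sub>R a + d *\<^sub>R a = b + (c + d) *\<^sub>R a"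
    and "b + d *\<^sub>R a = b + c *\<^sub>R a + (d - c) *\<^sub>R a" for d
    by (simp_all add: algebra_simps)
  then show ?thesis unfolding residue_def by blast
qed

lemma residue_rrefl [simp]: "residue a (rrefl a b) = residue a b"
  using residue_add_scaleR[of a b "- (2 * (b \<bullet> a) / (a \<bullet> a))"] by (simp add: rrefl_def)

lemma image_mset_mset_set_bij_betw:
  assumes "bij_betw h A B" and "\<And>x. x \<in> A \<Longrightarrow> f (h x) = f x"
  shows "image_mset f (mset_set B) = image_mset f (mset_set A)"
proof -
  have "mset_set B = image_mset h (mset_set A)"
    using assms(1) by (simp add: bij_betw_def image_mset_mset_set)
  also have "image_mset f \<dots> = image_mset (f \<circ> h) (mset_set A)"
    by (simp add: image_mset.compositionality)
  also have "\<dots> = image_mset f (mset_set A)"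
    using assms(2) by (cases "finite A") (auto intro: image_mset_cong)
  finally show ?thesis .
qed

definition rrefl_prod :: "'a::real_inner list \<Rightarrow> 'a \<Rightarrow> 'a" where
  "rrefl_prod ds = foldr (\<lambda>\<delta> f. rrefl \<delta> \<circ> f) ds id"

lemma rrefl_prod_Nil [simp]: "rrefl_prod [] = id"
  and rrefl_prod_Cons [simp]: "rrefl_prod (d # ds) = rrefl d \<circ> rrefl_prod ds"
  by (simp_all add: rrefl_prod_def)

lemma rrefl_prod_append: "rrefl_prod (xs @ ys) = rrefl_prod xs \<circ> rrefl_prod ys"
  by (induction xs) (auto simp: rrefl_prod_def)

locale root_base =
  fixes \<Phi> \<Delta> :: "'a::euclidean_space set"
  assumes root_system: "root_system \<Phi>" and simple_system: "simple_system \<Phi> \<Delta>"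
begin

abbreviation "P \<equiv> positive_roots \<Phi> \<Delta>"
abbreviation "N \<equiv> negative_roots \<Phi> \<Delta>"
abbreviation "W \<equiv> weyl_group \<Phi>"

definition nonneg_comb :: "'a \<Rightarrow> bool" where
  "nonneg_comb v \<longleftrightarrow> (\<exists>c. (\<forall>\<delta>\<in>\<Delta>. 0 \<le> c \<delta>) \<and> v = (\<Sum>\<delta>\<in>\<Delta>. c \<delta> *\<^sub>R \<delta>))"

lemma finite_roots: "finite \<Phi>"
  and zero_notin_roots: "0 \<notin> \<Phi>"
  and rrefl_image_roots: "\<alpha> \<in> \<Phi> \<Longrightarrow> rrefl \<alpha> ` \<Phi> = \<Phi>"
  and roots_reduced: "\<alpha> \<in> \<Phi> \<Longrightarrow> c *\<^sub>R \<alpha> \<in> \<Phi> \<Longrightarrow> c = 1 \<or> c = -1"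
  using root_system unfolding root_system_def by blast+

lemma simple_roots_subset: "\<Delta> \<subseteq> \<Phi>"
  and independent_simple_roots: "independent \<Delta>"
  and root_sign_comb: "\<beta> \<in> \<Phi> \<Longrightarrow> \<exists>c. \<beta> = (\<Sum>\<delta>\<in>\<Delta>. c \<delta> *\<^sub>R \<delta>)
                                      \<and> ((\<forall>\<delta>\<in>\<Delta>. c \<delta> \<ge> 0) \<or> (\<forall>\<delta>\<in>\<Delta>. c \<delta> \<le> 0))"
  using simple_system unfolding simple_system_def by blast+

lemma finite_simple_roots: "finite \<Delta>"
  using independent_bound independent_simple_roots by blast

lemma root_nonzero: "\<alpha> \<in> \<Phi> \<Longrightarrow> \<alpha> \<noteq> 0"
  using zero_notin_roots by blast

lemma rrefl_root: "\<alpha> \<in> \<Phi> \<Longrightarrow> \<beta> \<in> \<Phi> \<Longrightarrow> rrefl \<alpha> \<beta> \<in> \<Phi>"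
  using rrefl_image_roots by blast

lemma uminus_root: "\<alpha> \<in> \<Phi> \<Longrightarrow> - \<alpha> \<in> \<Phi>"
  using rrefl_root[of \<alpha> \<alpha>] root_nonzero by simp

lemma positive_roots_eq: "P = {\<beta>\<in>\<Phi>. nonneg_comb \<beta>}"
  unfolding positive_roots_def nonneg_comb_def by auto

lemma negative_roots_iff: "\<beta> \<in> N \<longleftrightarrow> - \<beta> \<in> P"
  unfolding negative_roots_def by (metis image_iff minus_minus)

lemma simple_coeffs_unique:
  assumes "(\<Sum>\<delta>\<in>\<Delta>. a \<delta> *\<^sub>R \<delta>) = (\<Sum>\<delta>\<in>\<Delta>. b \<delta> *\<^sub>R \<delta>)" and "\<gamma> \<in> \<Delta>"
  shows "a \<gamma> = b \<gamma>"
proof -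
  have "(\<Sum>\<delta>\<in>\<Delta>. (a \<delta> - b \<delta>) *\<^sub>R \<delta>) = 0"
    using assms(1) by (simp add: scaleR_diff_left sum_subtractf)
  then have "\<forall>\<delta>\<in>\<Delta>. a \<delta> - b \<delta> = 0"
    using independent_simple_roots dependent_finite[OF finite_simple_roots]
    by (auto dest: spec[of _ "\<lambda>v. a v - b v"])
  then show ?thesis using assms(2) by simp
qed

lemma sum_simple_roots_delta:
  assumes "\<delta> \<in> \<Delta>"
  shows "(\<Sum>\<gamma>\<in>\<Delta>. (if \<gamma> = \<delta> then k else 0) *\<^sub>R \<gamma>) = k *\<^sub>R \<delta>"
proof -
  have "(\<Sum>\<gamma>\<in>\<Delta>. (if \<gamma> = \<delta> then k else 0) *\<^sub>R \<gamma>) = (\<Sum>\<gamma>\<in>\<Delta>. if \<gamma> = \<delta> then k *\<^sub>R \<gamma> else 0)"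
    by (rule sum.cong) auto
  also have "\<dots> = k *\<^sub>R \<delta>"
    using assms finite_simple_roots by (simp add: sum.delta')
  finally show ?thesis .
qed

lemma nonneg_comb_zero: "nonneg_comb 0"
  unfolding nonneg_comb_def by (intro exI[of _ "\<lambda>_. 0"]) simp

lemma nonneg_comb_add:
  assumes "nonneg_comb u" and "nonneg_comb v"
  shows "nonneg_comb (u + v)"
proof -
  obtain c d where "\<forall>\<delta>\<in>\<Delta>. 0 \<le> c \<delta>" "u = (\<Sum>\<delta>\<in>\<Delta>. c \<delta> *\<^sub>R \<delta>)"
    and "\<forall>\<delta>\<in>\<Delta>. 0 \<le> d \<delta>" "v = (\<Sum>\<delta>\<in>\<Delta>. d \<delta> *\<^sub>R \<delta>)"
    using assms unfolding nonneg_comb_def by blast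
  then show ?thesis
    unfolding nonneg_comb_def
    by (intro exI[of _ "\<lambda>\<delta>. c \<delta> + d \<delta>"]) (simp add: scaleR_add_left sum.distrib)
qed

lemma nonneg_comb_scaleR:
  assumes "nonneg_comb u" and "0 \<le> k"
  shows "nonneg_comb (k *\<^sub>R u)"
proof -
  obtain c where "\<forall>\<delta>\<in>\<Delta>. 0 \<le> c \<delta>" "u = (\<Sum>\<delta>\<in>\<Delta>. c \<delta> *\<^sub>R \<delta>)"
    using assms unfolding nonneg_comb_def by blast
  then show ?thesis
    unfolding nonneg_comb_def using assms(2)
    by (intro exI[of _ "\<lambda>\<delta>. k * c \<delta>"]) (simp add: scaleR_sum_right)
qed

lemma nonneg_comb_simple_root: "\<delta> \<in> \<Delta> \<Longrightarrow> nonneg_comb \<delta>"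
  unfolding nonneg_comb_def
  by (rule exI[of _ "\<lambda>\<gamma>. if \<gamma> = \<delta> then 1 else 0"]) (simp add: sum_simple_roots_delta)

lemma nonneg_comb_antisym:
  assumes "nonneg_comb v" and "nonneg_comb (- v)"
  shows "v = 0"
proof -
  obtain c d where c: "\<forall>\<delta>\<in>\<Delta>. 0 \<le> c \<delta>" "v = (\<Sum>\<delta>\<in>\<Delta>. c \<delta> *\<^sub>R \<delta>)"
    and d: "\<forall>\<delta>\<in>\<Delta>. 0 \<le> d \<delta>" "- v = (\<Sum>\<delta>\<in>\<Delta>. d \<delta> *\<^sub>R \<delta>)"
    using assms unfolding nonneg_comb_def by blast
  have "(\<Sum>\<delta>\<in>\<Delta>. (c \<delta> + d \<delta>) *\<^sub>R \<delta>) = (\<Sum>\<delta>\<in>\<Delta>. 0 *\<^sub>R \<delta>)"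
    by (simp add: scaleR_add_left sum.distrib flip: c(2) d(2))
  then have "c \<delta> + d \<delta> = 0" if "\<delta> \<in> \<Delta>" for \<delta>
    using simple_coeffs_unique[of "\<lambda>\<delta>. c \<delta> + d \<delta>" "\<lambda>_. 0"] that by simp
  then have "\<forall>\<delta>\<in>\<Delta>. c \<delta> = 0"
    using c(1) d(1) by (simp add: add_nonneg_eq_0_iff)
  then show ?thesis using c(2) by simp
qed

lemma root_positive_or_negative: "\<beta> \<in> \<Phi> \<Longrightarrow> \<beta> \<in> P \<or> \<beta> \<in> N"
proof -
  assume \<beta>: "\<beta> \<in> \<Phi>"
  then obtain c where c: "\<beta> = (\<Sum>\<delta>\<in>\<Delta>. c \<delta> *\<^sub>R \<delta>)"
    and sign: "(\<forall>\<delta>\<in>\<Delta>. c \<delta> \<ge> 0) \<or> (\<forall>\<delta>\<in>\<Delta>. c \<delta> \<le> 0)"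
    using root_sign_comb by blast
  from sign have "nonneg_comb \<beta> \<or> nonneg_comb (- \<beta>)"
  proof
    assume "\<forall>\<delta>\<in>\<Delta>. c \<delta> \<ge> 0"
    then show ?thesis using c unfolding nonneg_comb_def by blast
  next
    assume "\<forall>\<delta>\<in>\<Delta>. c \<delta> \<le> 0"
    moreover have "- \<beta> = (\<Sum>\<delta>\<in>\<Delta>. (- c \<delta>) *\<^sub>R \<delta>)"
      unfolding c by (simp add: sum_negf)
    ultimately show ?thesis
      unfolding nonneg_comb_def by (intro disjI2 exI[of _ "\<lambda>\<delta>. - c \<delta>"]) simp
  qed
  then show ?thesis
    using \<beta> uminus_root by (auto simp: positive_roots_eq negative_roots_iff)
qed

lemma positive_negative_disjoint:
  assumes "\<beta> \<in> P" and "\<beta> \<in> N"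
  shows False
proof -
  have "nonneg_comb \<beta>" "nonneg_comb (- \<beta>)" "\<beta> \<in> \<Phi>"
    using assms unfolding negative_roots_iff positive_roots_eq by auto
  then show False
    using nonneg_comb_antisym zero_notin_roots by blast
qed

lemma positive_roots_subset: "P \<subseteq> \<Phi>"
  unfolding positive_roots_eq by auto

lemma simple_roots_positive: "\<Delta> \<subseteq> P"
  using simple_roots_subset nonneg_comb_simple_root unfolding positive_roots_eq by auto

lemma positive_root_nonneg_comb: "\<beta> \<in> P \<Longrightarrow> nonneg_comb \<beta>"
  unfolding positive_roots_eq by auto

lemma negative_root_iff_nonneg_comb: "\<beta> \<in> \<Phi> \<Longrightarrow> \<beta> \<in> N \<longleftrightarrow> nonneg_comb (- \<beta>)"
  unfolding negative_roots_iff positive_roots_eq using uminus_root by auto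

lemma nonneg_comb_below_simple_root:
  assumes \<delta>: "\<delta> \<in> \<Delta>" and u: "nonneg_comb u" and below: "nonneg_comb (k *\<^sub>R \<delta> - u)"
  shows "\<exists>c\<ge>0. u = c *\<^sub>R \<delta>"
proof -
  obtain c where c: "\<forall>\<gamma>\<in>\<Delta>. 0 \<le> c \<gamma>" "u = (\<Sum>\<gamma>\<in>\<Delta>. c \<gamma> *\<^sub>R \<gamma>)"
    using u unfolding nonneg_comb_def by blast
  obtain e where e: "\<forall>\<gamma>\<in>\<Delta>. 0 \<le> e \<gamma>" "k *\<^sub>R \<delta> - u = (\<Sum>\<gamma>\<in>\<Delta>. e \<gamma> *\<^sub>R \<gamma>)"
    using below unfolding nonneg_comb_def by blast
  have "(\<Sum>\<gamma>\<in>\<Delta>. (c \<gamma> + e \<gamma>) *\<^sub>R \<gamma>) = (\<Sum>\<gamma>\<in>\<Delta>. (if \<gamma> = \<delta> then k else 0) *\<^sub>R \<gamma>)"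
    by (simp add: scaleR_add_left sum.distrib sum_simple_roots_delta[OF \<delta>] flip: c(2) e(2))
  then have "c \<gamma> + e \<gamma> = 0" if "\<gamma> \<in> \<Delta>" "\<gamma> \<noteq> \<delta>" for \<gamma>
    using simple_coeffs_unique that by fastforce
  then have "c \<gamma> = 0" if "\<gamma> \<in> \<Delta>" "\<gamma> \<noteq> \<delta>" for \<gamma>
    using that c(1) e(1) by (meson add_nonneg_eq_0_iff)
  then have "u = (\<Sum>\<gamma>\<in>\<Delta>. (if \<gamma> = \<delta> then c \<delta> else 0) *\<^sub>R \<gamma>)"
    unfolding c(2) by (intro sum.cong) auto
  also have "\<dots> = c \<delta> *\<^sub>R \<delta>"
    by (rule sum_simple_roots_delta[OF \<delta>])
  finally show ?thesis
    using c(1) \<delta> by blast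
qed

lemma rrefl_simple_root_positive:
  assumes \<delta>: "\<delta> \<in> \<Delta>" and \<beta>: "\<beta> \<in> P" and "\<beta> \<noteq> \<delta>"
  shows "rrefl \<delta> \<beta> \<in> P"
proof (rule ccontr)
  assume "rrefl \<delta> \<beta> \<notin> P"
  moreover have "\<delta> \<in> \<Phi>" "\<beta> \<in> \<Phi>"
    using \<delta> \<beta> simple_roots_subset positive_roots_subset by auto
  ultimately have "nonneg_comb (- rrefl \<delta> \<beta>)"
    using rrefl_root root_positive_or_negative negative_root_iff_nonneg_comb by blast
  then have "nonneg_comb ((2 * (\<beta> \<bullet> \<delta>) / (\<delta> \<bullet> \<delta>)) *\<^sub>R \<delta> - \<beta>)"
    by (simp add: rrefl_def)
  then obtain c where "c \<ge> 0" "\<beta> = c *\<^sub>R \<delta>"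
    using nonneg_comb_below_simple_root \<delta> positive_root_nonneg_comb[OF \<beta>] by blast
  then have "c = 1 \<or> c = -1"
    using roots_reduced \<open>\<delta> \<in> \<Phi>\<close> \<open>\<beta> \<in> \<Phi>\<close> by blast
  with \<open>c \<ge> 0\<close> have "c = 1" by linarith
  then show False using \<open>\<beta> = c *\<^sub>R \<delta>\<close> \<open>\<beta> \<noteq> \<delta>\<close> by simp
qed

lemma positive_root_inner_simple_root:
  assumes \<beta>: "\<beta> \<in> P"
  shows "\<exists>\<delta>\<in>\<Delta>. \<beta> \<bullet> \<delta> > 0"
proof (rule ccontr)
  assume "\<not> ?thesis"
  then have le: "\<forall>\<delta>\<in>\<Delta>. \<beta> \<bullet> \<delta> \<le> 0" by force
  obtain c where c: "\<forall>\<gamma>\<in>\<Delta>. 0 \<le> c \<gamma>" "\<beta> = (\<Sum>\<gamma>\<in>\<Delta>. c \<gamma> *\<^sub>R \<gamma>)"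
    using positive_root_nonneg_comb[OF \<beta>] unfolding nonneg_comb_def by blast
  have "\<beta> \<bullet> \<beta> = (\<Sum>\<gamma>\<in>\<Delta>. c \<gamma> * (\<beta> \<bullet> \<gamma>))"
    by (subst (2) c(2)) (simp add: inner_sum_right)
  also have "\<dots> \<le> 0"
    using c(1) le by (intro sum_nonpos) (simp add: mult_nonneg_nonpos)
  finally have "\<beta> \<bullet> \<beta> = 0"
    using inner_ge_zero[of \<beta>] by linarith
  then show False
    using \<beta> positive_roots_subset zero_notin_roots by force
qed

definition roots_below :: "'a \<Rightarrow> 'a set" where
  "roots_below \<beta> = {\<gamma>\<in>P. nonneg_comb (\<beta> - \<gamma>)}"

lemma finite_roots_below: "finite (roots_below \<beta>)"
  unfolding roots_below_def
  using finite_roots positive_roots_subset by (auto intro: finite_subset)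

lemma roots_below_diff_psubset:
  assumes "\<beta> \<in> P" and "nonneg_comb v" and "v \<noteq> 0"
  shows "roots_below (\<beta> - v) \<subset> roots_below \<beta>"
proof
  show "roots_below (\<beta> - v) \<subseteq> roots_below \<beta>"
  proof
    fix \<gamma> assume "\<gamma> \<in> roots_below (\<beta> - v)"
    then have "\<gamma> \<in> P" "nonneg_comb (\<beta> - v - \<gamma>)"
      by (simp_all add: roots_below_def)
    then have "nonneg_comb ((\<beta> - v - \<gamma>) + v)"
      using nonneg_comb_add assms(2) by blast
    then show "\<gamma> \<in> roots_below \<beta>"
      using \<open>\<gamma> \<in> P\<close> by (simp add: roots_below_def)
  qed
  have "\<beta> \<notin> roots_below (\<beta> - v)"
    using nonneg_comb_antisym assms(2,3) by (auto simp: roots_below_def)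
  moreover have "\<beta> \<in> roots_below \<beta>"
    using assms(1) nonneg_comb_zero by (simp add: roots_below_def)
  ultimately show "roots_below (\<beta> - v) \<noteq> roots_below \<beta>"
    by blast
qed

lemma rrefl_positive_root_word:
  assumes "\<beta> \<in> P"
  shows "\<exists>ds. set ds \<subseteq> \<Delta> \<and> rrefl \<beta> = rrefl_prod ds"
  using assms
proof (induction "card (roots_below \<beta>)" arbitrary: \<beta> rule: less_induct)
  case less
  show ?case
  proof (cases "\<beta> \<in> \<Delta>")
    case True
    then show ?thesis by (intro exI[of _ "[\<beta>]"]) simp
  next
    case False
    obtain \<delta> where \<delta>: "\<delta> \<in> \<Delta>" "\<beta> \<bullet> \<delta> > 0"
      using positive_root_inner_simple_root[OF less.prems] by blast
    have "\<delta> \<noteq> 0" using \<delta>(1) simple_roots_subset root_nonzero by auto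
    define k where "k = 2 * (\<beta> \<bullet> \<delta>) / (\<delta> \<bullet> \<delta>)"
    have "k > 0" unfolding k_def using \<delta>(2) \<open>\<delta> \<noteq> 0\<close> by simp
    define \<beta>' where "\<beta>' = rrefl \<delta> \<beta>"
    have \<beta>': "\<beta>' = \<beta> - k *\<^sub>R \<delta>" "\<beta>' \<in> P"
      using rrefl_simple_root_positive \<delta>(1) less.prems False
      by (auto simp: \<beta>'_def rrefl_def k_def)
    have "nonneg_comb (k *\<^sub>R \<delta>)" "k *\<^sub>R \<delta> \<noteq> 0"
      using nonneg_comb_scaleR nonneg_comb_simple_root[OF \<delta>(1)] \<open>k > 0\<close> \<open>\<delta> \<noteq> 0\<close> by simp_all
    then have "roots_below \<beta>' \<subset> roots_below \<beta>"
      unfolding \<beta>'(1) using roots_below_diff_psubset less.prems by blast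
    then have "card (roots_below \<beta>') < card (roots_below \<beta>)"
      using psubset_card_mono finite_roots_below by blast
    then obtain es where es: "set es \<subseteq> \<Delta>" "rrefl \<beta>' = rrefl_prod es"
      using less.hyps \<beta>'(2) by blast
    have "rrefl \<beta> = rrefl \<beta> \<circ> rrefl \<delta> \<circ> rrefl \<delta>"
      using \<open>\<delta> \<noteq> 0\<close> by (simp add: fun_eq_iff)
    also have "\<dots> = rrefl \<delta> \<circ> rrefl \<beta>' \<circ> rrefl \<delta>"
      using rrefl_rrefl_conj[OF \<open>\<delta> \<noteq> 0\<close>, of \<beta>'] \<open>\<delta> \<noteq> 0\<close> by (simp add: \<beta>'_def)
    also have "\<dots> = rrefl_prod (\<delta> # es @ [\<delta>])"
      using es(2) by (simp add: rrefl_prod_append comp_assoc)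
    finally show ?thesis using es(1) \<delta>(1) by (intro exI[of _ "\<delta> # es @ [\<delta>]"]) auto
  qed
qed

lemma weyl_group_props:
  "w \<in> W \<Longrightarrow> linear w \<and> inj w \<and> w ` \<Phi> = \<Phi> \<and> (\<exists>ds. set ds \<subseteq> \<Delta> \<and> w = rrefl_prod ds)"
proof (induction rule: weyl_group.induct)
  case weyl_id
  then show ?case by (auto intro!: linearI exI[of _ "[]"])
next
  case (weyl_step \<alpha> w)
  then obtain ds where ds: "set ds \<subseteq> \<Delta>" "w = rrefl_prod ds" by blast
  have "\<alpha> \<in> P \<or> - \<alpha> \<in> P"
    using root_positive_or_negative weyl_step(1) negative_roots_iff by blast
  then obtain es where es: "set es \<subseteq> \<Delta>" "rrefl \<alpha> = rrefl_prod es"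
    using rrefl_positive_root_word rrefl_uminus_root by metis
  show ?case
  proof (intro conjI)
    show "linear (rrefl \<alpha> \<circ> w)"
      using weyl_step linear_rrefl linear_compose by blast
    show "inj (rrefl \<alpha> \<circ> w)"
      using weyl_step inj_rrefl root_nonzero by (metis inj_compose)
    show "(rrefl \<alpha> \<circ> w) ` \<Phi> = \<Phi>"
      using weyl_step rrefl_image_roots by (metis image_comp)
    show "\<exists>ds. set ds \<subseteq> \<Delta> \<and> rrefl \<alpha> \<circ> w = rrefl_prod ds"
      using es ds by (intro exI[of _ "es @ ds"]) (simp add: rrefl_prod_append)
  qed
qed

lemma weyl_group_linear: "w \<in> W \<Longrightarrow> linear w"
  and weyl_group_inj: "w \<in> W \<Longrightarrow> inj w"
  and weyl_group_image_roots: "w \<in> W \<Longrightarrow> w ` \<Phi> = \<Phi>"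
  and weyl_group_word: "w \<in> W \<Longrightarrow> \<exists>ds. set ds \<subseteq> \<Delta> \<and> w = rrefl_prod ds"
  using weyl_group_props by blast+

lemma rrefl_prod_weyl_group: "set ds \<subseteq> \<Phi> \<Longrightarrow> rrefl_prod ds \<in> W"
  by (induction ds) (auto intro: weyl_group.intros)

lemma weyl_group_image_positive_negative:
  assumes w: "w \<in> W" and "\<beta> \<in> \<Phi>"
  shows "\<beta> \<in> w ` P \<longleftrightarrow> \<beta> \<notin> w ` N"
proof -
  have "\<beta> \<in> w ` P \<or> \<beta> \<in> w ` N"
    using assms weyl_group_image_roots root_positive_or_negative by blast
  moreover have "\<not> (\<beta> \<in> w ` P \<and> \<beta> \<in> w ` N)"
    using weyl_group_inj[OF w] positive_negative_disjoint by (auto dest: injD)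
  ultimately show ?thesis by blast
qed

lemma weyl_group_image_negative_uminus:
  assumes w: "w \<in> W" and "\<beta> \<in> \<Phi>"
  shows "- \<beta> \<in> w ` N \<longleftrightarrow> \<beta> \<notin> w ` N"
proof -
  have "- \<beta> \<in> w ` N \<longleftrightarrow> \<beta> \<in> w ` P"
    using linear_neg[OF weyl_group_linear[OF w]] negative_roots_iff
    by (metis (no_types, opaque_lifting) image_iff minus_minus)
  then show ?thesis using weyl_group_image_positive_negative assms by blast
qed

lemma inv_set_iff: "\<beta> \<in> inv_set \<Phi> \<Delta> w \<longleftrightarrow> \<beta> \<in> P \<and> \<beta> \<in> w ` N"
  by (simp add: inv_set_def)

lemma inv_set_rrefl_comp_iff:
  assumes "a \<noteq> 0"
  shows "\<beta> \<in> inv_set \<Phi> \<Delta> (rrefl a \<circ> w) \<longleftrightarrow> \<beta> \<in> P \<and> rrefl a \<beta> \<in> w ` N"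
  by (simp only: inv_set_iff rrefl_mem_image_comp_iff[OF assms])

lemma finite_inv_set: "finite (inv_set \<Phi> \<Delta> w)"
  using finite_roots positive_roots_subset
  by (metis inv_set_def finite_Int finite_subset)

lemma inv_set_id: "inv_set \<Phi> \<Delta> id = {}"
  using positive_negative_disjoint by (auto simp: inv_set_iff)

lemma strong_exchange:
  "set ds \<subseteq> \<Delta> \<Longrightarrow> \<beta> \<in> P \<Longrightarrow> \<beta> \<in> rrefl_prod ds ` N \<Longrightarrow>
   \<exists>es. set es \<subseteq> set ds \<and> length es < length ds \<and> rrefl \<beta> \<circ> rrefl_prod ds = rrefl_prod es"
proof (induction ds arbitrary: \<beta>)
  case Nil
  then show ?case using positive_negative_disjoint by auto
next
  case (Cons \<epsilon> ds)
  have "\<epsilon> \<noteq> 0" "set ds \<subseteq> \<Delta>"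
    using Cons.prems(1) simple_roots_subset root_nonzero by auto
  show ?case
  proof (cases "\<beta> = \<epsilon>")
    case True
    then show ?thesis using \<open>\<epsilon> \<noteq> 0\<close> by (intro exI[of _ ds]) (auto simp: fun_eq_iff)
  next
    case False
    define \<beta>' where "\<beta>' = rrefl \<epsilon> \<beta>"
    have "\<beta>' \<in> P"
      unfolding \<beta>'_def using Cons.prems(1,2) False by (intro rrefl_simple_root_positive) auto
    moreover have "\<beta>' \<in> rrefl_prod ds ` N"
      using Cons.prems(3) unfolding \<beta>'_def rrefl_prod_Cons rrefl_mem_image_comp_iff[OF \<open>\<epsilon> \<noteq> 0\<close>] .
    ultimately obtain es where es: "set es \<subseteq> set ds" "length es < length ds"
      "rrefl \<beta>' \<circ> rrefl_prod ds = rrefl_prod es"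
      using Cons.IH[OF \<open>set ds \<subseteq> \<Delta>\<close>] by blast
    have "rrefl \<beta> \<circ> rrefl_prod (\<epsilon> # ds) = rrefl \<epsilon> \<circ> (rrefl \<beta>' \<circ> rrefl_prod ds)"
      using rrefl_rrefl_conj[OF \<open>\<epsilon> \<noteq> 0\<close>, of \<beta>'] \<open>\<epsilon> \<noteq> 0\<close>
      by (simp add: \<beta>'_def comp_assoc[symmetric])
    also have "\<dots> = rrefl_prod (\<epsilon> # es)" using es(3) by simp
    finally show ?thesis
      using es(1,2) by (intro exI[of _ "\<epsilon> # es"]) (auto simp: comp_def)
  qed
qed

lemma inv_set_rrefl_simple_root:
  assumes u: "u \<in> W" and \<delta>: "\<delta> \<in> \<Delta>" and "\<delta> \<notin> u ` N"
  shows "inv_set \<Phi> \<Delta> (rrefl \<delta> \<circ> u) = insert \<delta> (rrefl \<delta> ` inv_set \<Phi> \<Delta> u)"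
    and "\<delta> \<notin> rrefl \<delta> ` inv_set \<Phi> \<Delta> u"
proof -
  have "\<delta> \<noteq> 0" "\<delta> \<in> P" "\<delta> \<in> \<Phi>"
    using \<delta> simple_roots_subset simple_roots_positive root_nonzero by auto
  have "- \<delta> \<in> u ` N"
    using weyl_group_image_negative_uminus u \<open>\<delta> \<in> \<Phi>\<close> \<open>\<delta> \<notin> u ` N\<close> by blast
  then have \<delta>_inv: "\<delta> \<in> inv_set \<Phi> \<Delta> (rrefl \<delta> \<circ> u)"
    using \<open>\<delta> \<in> P\<close> \<open>\<delta> \<noteq> 0\<close> by (simp add: inv_set_rrefl_comp_iff)
  have positive_iff: "\<beta> \<in> P \<longleftrightarrow> rrefl \<delta> \<beta> \<in> P" if "\<beta> \<noteq> \<delta>" and "rrefl \<delta> \<beta> \<in> u ` N" for \<beta>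
  proof
    show "\<beta> \<in> P \<Longrightarrow> rrefl \<delta> \<beta> \<in> P"
      using rrefl_simple_root_positive[OF \<delta>] that(1) by blast
    have "rrefl \<delta> \<beta> \<noteq> \<delta>" using that(2) \<open>\<delta> \<notin> u ` N\<close> by metis
    then show "rrefl \<delta> \<beta> \<in> P \<Longrightarrow> \<beta> \<in> P"
      using rrefl_simple_root_positive[OF \<delta>, of "rrefl \<delta> \<beta>"] \<open>\<delta> \<noteq> 0\<close> by simp
  qed
  have "\<beta> \<in> inv_set \<Phi> \<Delta> (rrefl \<delta> \<circ> u) \<longleftrightarrow> \<beta> \<in> rrefl \<delta> ` inv_set \<Phi> \<Delta> u"
    if "\<beta> \<noteq> \<delta>" for \<beta>
  proof -
    have "\<beta> \<in> inv_set \<Phi> \<Delta> (rrefl \<delta> \<circ> u) \<longleftrightarrow> \<beta> \<in> P \<and> rrefl \<delta> \<beta> \<in> u ` N"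
      by (rule inv_set_rrefl_comp_iff[OF \<open>\<delta> \<noteq> 0\<close>])
    also have "\<dots> \<longleftrightarrow> rrefl \<delta> \<beta> \<in> P \<and> rrefl \<delta> \<beta> \<in> u ` N"
      using positive_iff[OF that] by blast
    also have "\<dots> \<longleftrightarrow> \<beta> \<in> rrefl \<delta> ` inv_set \<Phi> \<Delta> u"
      by (simp add: inv_set_iff rrefl_mem_image_iff[OF \<open>\<delta> \<noteq> 0\<close>])
    finally show ?thesis .
  qed
  then show "inv_set \<Phi> \<Delta> (rrefl \<delta> \<circ> u) = insert \<delta> (rrefl \<delta> ` inv_set \<Phi> \<Delta> u)"
    using \<delta>_inv by (intro set_eqI) (metis insert_iff)
  have "- \<delta> \<notin> inv_set \<Phi> \<Delta> u"
    using \<open>\<delta> \<in> P\<close> positive_negative_disjoint negative_roots_iff by (auto simp: inv_set_iff)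
  then show "\<delta> \<notin> rrefl \<delta> ` inv_set \<Phi> \<Delta> u"
    using rrefl_mem_image_iff[OF \<open>\<delta> \<noteq> 0\<close>] \<open>\<delta> \<noteq> 0\<close> by simp
qed

definition reduced_word :: "'a list \<Rightarrow> bool" where
  "reduced_word ds \<longleftrightarrow> set ds \<subseteq> \<Delta> \<and>
     (\<forall>es. set es \<subseteq> \<Delta> \<longrightarrow> rrefl_prod es = rrefl_prod ds \<longrightarrow> length ds \<le> length es)"

lemma reduced_word_Cons:
  assumes "reduced_word (\<delta> # ds)"
  shows "reduced_word ds" and "\<delta> \<notin> rrefl_prod ds ` N"
proof -
  have \<delta>: "\<delta> \<in> \<Delta>" and ds: "set ds \<subseteq> \<Delta>"
    using assms by (auto simp: reduced_word_def)
  have minimal: "length (\<delta> # ds) \<le> length es" if "set es \<subseteq> \<Delta>" "rrefl_prod es = rrefl_prod (\<delta> # ds)" for es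
    using assms that by (auto simp: reduced_word_def)
  show "reduced_word ds"
    unfolding reduced_word_def
  proof (intro conjI allI impI ds)
    fix es assume "set es \<subseteq> \<Delta>" "rrefl_prod es = rrefl_prod ds"
    then show "length ds \<le> length es"
      using minimal[of "\<delta> # es"] \<delta> by simp
  qed
  show "\<delta> \<notin> rrefl_prod ds ` N"
  proof
    assume "\<delta> \<in> rrefl_prod ds ` N"
    then obtain es where "set es \<subseteq> set ds" "length es < length ds"
      "rrefl \<delta> \<circ> rrefl_prod ds = rrefl_prod es"
      using strong_exchange ds \<delta> simple_roots_positive by blast
    then show False
      using minimal[of es] ds by auto
  qed
qed

lemma card_inv_set_reduced_word:
  "reduced_word ds \<Longrightarrow> card (inv_set \<Phi> \<Delta> (rrefl_prod ds)) = length ds"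
proof (induction ds)
  case Nil
  then show ?case by (simp only: rrefl_prod_Nil inv_set_id) simp
next
  case (Cons \<delta> ds)
  have \<delta>: "\<delta> \<in> \<Delta>" "\<delta> \<noteq> 0" and ds: "set ds \<subseteq> \<Delta>"
    using Cons.prems simple_roots_subset root_nonzero by (auto simp: reduced_word_def)
  have "rrefl_prod ds \<in> W"
    using rrefl_prod_weyl_group ds simple_roots_subset by blast
  note step = inv_set_rrefl_simple_root[OF this \<delta>(1) reduced_word_Cons(2)[OF Cons.prems]]
  have "card (rrefl \<delta> ` inv_set \<Phi> \<Delta> (rrefl_prod ds)) = card (inv_set \<Phi> \<Delta> (rrefl_prod ds))"
    using inj_rrefl[OF \<delta>(2)] by (simp add: card_image inj_on_subset)
  then show ?case
    unfolding rrefl_prod_Cons step(1)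
    using step(2) finite_inv_set Cons.IH reduced_word_Cons(1)[OF Cons.prems] by simp
qed

lemma wlen_eq_card_inv_set:
  assumes "w \<in> W"
  shows "wlen \<Delta> w = card (inv_set \<Phi> \<Delta> w)"
proof -
  define Q where "Q n \<longleftrightarrow> (\<exists>ds. length ds = n \<and> set ds \<subseteq> \<Delta> \<and> w = rrefl_prod ds)" for n
  have wlen: "wlen \<Delta> w = (LEAST n. Q n)"
    by (simp add: wlen_def rrefl_prod_def Q_def)
  obtain ds0 where "set ds0 \<subseteq> \<Delta>" "w = rrefl_prod ds0"
    using weyl_group_word assms by blast
  then have "Q (length ds0)"
    unfolding Q_def by blast
  then have "Q (LEAST n. Q n)"
    by (rule LeastI)
  then obtain ds where ds: "length ds = wlen \<Delta> w" "set ds \<subseteq> \<Delta>" "w = rrefl_prod ds"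
    unfolding Q_def wlen by blast
  have "reduced_word ds"
    unfolding reduced_word_def
  proof (intro conjI allI impI ds(2))
    fix es assume "set es \<subseteq> \<Delta>" "rrefl_prod es = rrefl_prod ds"
    then have "Q (length es)"
      unfolding Q_def using ds(3) by auto
    then show "length ds \<le> length es"
      unfolding ds(1) wlen by (rule Least_le)
  qed
  then show ?thesis
    using card_inv_set_reduced_word ds by simp
qed

lemma inner_positive_if_rrefl_not_positive:
  assumes \<alpha>: "\<alpha> \<in> P" and \<beta>: "\<beta> \<in> P" and "rrefl \<alpha> \<beta> \<notin> P"
  shows "\<beta> \<bullet> \<alpha> > 0"
proof (rule ccontr)
  assume "\<not> \<beta> \<bullet> \<alpha> > 0"
  then have "0 \<le> - (2 * (\<beta> \<bullet> \<alpha>) / (\<alpha> \<bullet> \<alpha>))"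
    by (simp add: divide_nonpos_nonneg)
  then have "nonneg_comb (\<beta> + (- (2 * (\<beta> \<bullet> \<alpha>) / (\<alpha> \<bullet> \<alpha>))) *\<^sub>R \<alpha>)"
    using nonneg_comb_add nonneg_comb_scaleR positive_root_nonneg_comb \<alpha> \<beta> by blast
  moreover have "rrefl \<alpha> \<beta> \<in> \<Phi>"
    using \<alpha> \<beta> positive_roots_subset rrefl_root by blast
  ultimately have "rrefl \<alpha> \<beta> \<in> P"
    by (simp add: positive_roots_eq rrefl_def)
  then show False using \<open>rrefl \<alpha> \<beta> \<notin> P\<close> by contradiction
qed

lemma rrefl_inversion_in_image_negative:
  assumes w: "w \<in> W" and \<alpha>: "\<alpha> \<in> P" "\<alpha> \<notin> w ` N"
    and \<beta>: "\<beta> \<in> inv_set \<Phi> \<Delta> w" and not_pos: "rrefl \<alpha> \<beta> \<notin> P"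
  shows "rrefl \<alpha> \<beta> \<in> w ` N"
proof -
  have "\<alpha> \<in> \<Phi>" "\<beta> \<in> P"
    using \<alpha> \<beta> positive_roots_subset by (auto simp: inv_set_iff)
  define k where "k = 2 * (\<beta> \<bullet> \<alpha>) / (\<alpha> \<bullet> \<alpha>)"
  have "k > 0"
    using inner_positive_if_rrefl_not_positive[OF \<alpha>(1) \<open>\<beta> \<in> P\<close> not_pos] \<open>\<alpha> \<in> \<Phi>\<close> root_nonzero
    by (simp add: k_def)
  obtain \<eta> where \<eta>: "\<eta> \<in> P" "\<alpha> = w \<eta>"
    using weyl_group_image_positive_negative[OF w \<open>\<alpha> \<in> \<Phi>\<close>] \<alpha>(2) by blast
  obtain \<gamma> where \<gamma>: "\<gamma> \<in> N" "\<beta> = w \<gamma>"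
    using \<beta> by (auto simp: inv_set_iff)
  have "rrefl \<alpha> \<beta> = w (\<gamma> - k *\<^sub>R \<eta>)"
    using linear_diff[OF weyl_group_linear[OF w]] linear_scale[OF weyl_group_linear[OF w]] \<eta> \<gamma>
    by (simp add: rrefl_def k_def)
  moreover have "rrefl \<alpha> \<beta> \<in> \<Phi>"
    using \<open>\<alpha> \<in> \<Phi>\<close> \<open>\<beta> \<in> P\<close> positive_roots_subset rrefl_root by blast
  ultimately have "\<gamma> - k *\<^sub>R \<eta> \<in> \<Phi>"
    using weyl_group_image_roots[OF w] weyl_group_inj[OF w] by (metis imageE injD)
  moreover have "nonneg_comb (- (\<gamma> - k *\<^sub>R \<eta>))"
    using nonneg_comb_add[of "- \<gamma>" "k *\<^sub>R \<eta>"] nonneg_comb_scaleR \<open>k > 0\<close> \<eta>(1) \<gamma>(1)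
      positive_root_nonneg_comb negative_roots_iff by simp
  ultimately have "\<gamma> - k *\<^sub>R \<eta> \<in> N"
    using negative_root_iff_nonneg_comb by blast
  then show ?thesis
    using \<open>rrefl \<alpha> \<beta> = w (\<gamma> - k *\<^sub>R \<eta>)\<close> by blast
qed

definition rrefl_if_positive :: "'a \<Rightarrow> 'a \<Rightarrow> 'a" where
  "rrefl_if_positive \<alpha> \<beta> = (if rrefl \<alpha> \<beta> \<in> P then rrefl \<alpha> \<beta> else \<beta>)"

lemma residue_rrefl_if_positive [simp]: "residue \<alpha> (rrefl_if_positive \<alpha> \<beta>) = residue \<alpha> \<beta>"
  by (simp add: rrefl_if_positive_def)

lemma inj_on_rrefl_if_positive:
  assumes "\<alpha> \<noteq> 0"
  shows "inj_on (rrefl_if_positive \<alpha>) P"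
proof
  fix x y assume "x \<in> P" "y \<in> P" and eq: "rrefl_if_positive \<alpha> x = rrefl_if_positive \<alpha> y"
  show "x = y"
  proof (cases "rrefl \<alpha> x \<in> P"; cases "rrefl \<alpha> y \<in> P")
    assume "rrefl \<alpha> x \<in> P" "rrefl \<alpha> y \<in> P"
    then show ?thesis
      using eq inj_rrefl[OF assms] by (simp add: rrefl_if_positive_def inj_eq)
  next
    assume "rrefl \<alpha> x \<in> P" "rrefl \<alpha> y \<notin> P"
    then have "rrefl \<alpha> x = y" using eq by (simp add: rrefl_if_positive_def)
    then show ?thesis using \<open>rrefl \<alpha> y \<notin> P\<close> \<open>x \<in> P\<close> assms by auto
  next
    assume "rrefl \<alpha> x \<notin> P" "rrefl \<alpha> y \<in> P"
    then have "rrefl \<alpha> y = x" using eq by (simp add: rrefl_if_positive_def)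
    then show ?thesis using \<open>rrefl \<alpha> x \<notin> P\<close> \<open>y \<in> P\<close> assms by auto
  next
    assume "rrefl \<alpha> x \<notin> P" "rrefl \<alpha> y \<notin> P"
    then show ?thesis using eq by (simp add: rrefl_if_positive_def)
  qed
qed

lemma rrefl_if_positive_image_inv_set:
  assumes w: "w \<in> W" and \<alpha>: "\<alpha> \<in> P" "\<alpha> \<notin> w ` N"
  shows "rrefl_if_positive \<alpha> ` insert \<alpha> (inv_set \<Phi> \<Delta> w) \<subseteq> inv_set \<Phi> \<Delta> (rrefl \<alpha> \<circ> w)"
proof -
  have "\<alpha> \<in> \<Phi>" "\<alpha> \<noteq> 0" "- \<alpha> \<notin> P"
    using \<alpha>(1) positive_roots_subset root_nonzero positive_negative_disjoint negative_roots_iff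
    by auto
  have "- \<alpha> \<in> w ` N"
    using weyl_group_image_negative_uminus[OF w \<open>\<alpha> \<in> \<Phi>\<close>] \<alpha>(2) by blast
  then have "rrefl_if_positive \<alpha> \<alpha> \<in> inv_set \<Phi> \<Delta> (rrefl \<alpha> \<circ> w)"
    using \<alpha>(1) \<open>\<alpha> \<noteq> 0\<close> \<open>- \<alpha> \<notin> P\<close>
    by (simp add: rrefl_if_positive_def inv_set_rrefl_comp_iff)
  moreover have "rrefl_if_positive \<alpha> \<beta> \<in> inv_set \<Phi> \<Delta> (rrefl \<alpha> \<circ> w)"
    if \<beta>: "\<beta> \<in> inv_set \<Phi> \<Delta> w" for \<beta>
  proof -
    have "\<beta> \<in> P" "\<beta> \<in> w ` N"
      using \<beta> by (simp_all add: inv_set_iff)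
    then show ?thesis
      using \<open>\<alpha> \<noteq> 0\<close> rrefl_inversion_in_image_negative[OF w \<alpha> \<beta>]
      by (simp add: rrefl_if_positive_def inv_set_rrefl_comp_iff)
  qed
  ultimately show ?thesis by blast
qed

lemma card_inv_set_rrefl_ge:
  assumes w: "w \<in> W" and \<alpha>: "\<alpha> \<in> P" "\<alpha> \<notin> w ` N"
  shows "card (inv_set \<Phi> \<Delta> w) + 1 \<le> card (inv_set \<Phi> \<Delta> (rrefl \<alpha> \<circ> w))"
proof -
  have "\<alpha> \<noteq> 0" "\<alpha> \<notin> inv_set \<Phi> \<Delta> w" "insert \<alpha> (inv_set \<Phi> \<Delta> w) \<subseteq> P"
    using \<alpha> positive_roots_subset root_nonzero by (auto simp: inv_set_iff)
  then have "inj_on (rrefl_if_positive \<alpha>) (insert \<alpha> (inv_set \<Phi> \<Delta> w))"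
    using inj_on_subset inj_on_rrefl_if_positive by blast
  then have "card (insert \<alpha> (inv_set \<Phi> \<Delta> w)) \<le> card (inv_set \<Phi> \<Delta> (rrefl \<alpha> \<circ> w))"
    using card_inj_on_le rrefl_if_positive_image_inv_set[OF assms] finite_inv_set by blast
  then show ?thesis
    using \<open>\<alpha> \<notin> inv_set \<Phi> \<Delta> w\<close> finite_inv_set by simp
qed

lemma not_mem_image_negative_if_card_inv_set_rrefl:
  assumes w: "w \<in> W" and \<alpha>: "\<alpha> \<in> P"
    and card: "card (inv_set \<Phi> \<Delta> (rrefl \<alpha> \<circ> w)) = card (inv_set \<Phi> \<Delta> w) + 1"
  shows "\<alpha> \<notin> w ` N"
proof
  assume "\<alpha> \<in> w ` N"
  have "\<alpha> \<in> \<Phi>" "\<alpha> \<noteq> 0"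
    using \<alpha> positive_roots_subset root_nonzero by auto
  let ?v = "rrefl \<alpha> \<circ> w"
  \<comment> \<open>Now \<open>?v\<^sup>-\<^sup>1 \<alpha> = - w\<^sup>-\<^sup>1 \<alpha>\<close> is positive, so going from \<open>?v\<close> back to \<open>w\<close> raises the count again.\<close>
  have "?v \<in> W"
    using weyl_group.weyl_step[OF \<open>\<alpha> \<in> \<Phi>\<close> w] .
  moreover have "\<alpha> \<notin> ?v ` N"
    unfolding rrefl_mem_image_comp_iff[OF \<open>\<alpha> \<noteq> 0\<close>] rrefl_self[OF \<open>\<alpha> \<noteq> 0\<close>]
    using weyl_group_image_negative_uminus[OF w \<open>\<alpha> \<in> \<Phi>\<close>] \<open>\<alpha> \<in> w ` N\<close> by blast
  ultimately have "card (inv_set \<Phi> \<Delta> ?v) + 1 \<le> card (inv_set \<Phi> \<Delta> (rrefl \<alpha> \<circ> ?v))"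
    using card_inv_set_rrefl_ge \<alpha> by blast
  moreover have "rrefl \<alpha> \<circ> ?v = w"
    using \<open>\<alpha> \<noteq> 0\<close> by (simp add: fun_eq_iff)
  ultimately show False
    using card by simp
qed

lemma bij_betw_rrefl_if_positive_inv_set:
  assumes w: "w \<in> W" and \<alpha>: "\<alpha> \<in> P"
    and card: "card (inv_set \<Phi> \<Delta> (rrefl \<alpha> \<circ> w)) = card (inv_set \<Phi> \<Delta> w) + 1"
  shows "bij_betw (rrefl_if_positive \<alpha>) (insert \<alpha> (inv_set \<Phi> \<Delta> w)) (inv_set \<Phi> \<Delta> (rrefl \<alpha> \<circ> w))"
proof -
  have "\<alpha> \<notin> w ` N"
    using not_mem_image_negative_if_card_inv_set_rrefl assms by blast
  have "\<alpha> \<noteq> 0" "\<alpha> \<notin> inv_set \<Phi> \<Delta> w" "insert \<alpha> (inv_set \<Phi> \<Delta> w) \<subseteq> P"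
    using \<alpha> \<open>\<alpha> \<notin> w ` N\<close> positive_roots_subset root_nonzero by (auto simp: inv_set_iff)
  then have inj: "inj_on (rrefl_if_positive \<alpha>) (insert \<alpha> (inv_set \<Phi> \<Delta> w))"
    using inj_on_subset inj_on_rrefl_if_positive by blast
  moreover have "card (rrefl_if_positive \<alpha> ` insert \<alpha> (inv_set \<Phi> \<Delta> w))
      = card (inv_set \<Phi> \<Delta> (rrefl \<alpha> \<circ> w))"
    using card card_image[OF inj] \<open>\<alpha> \<notin> inv_set \<Phi> \<Delta> w\<close> finite_inv_set by simp
  ultimately show ?thesis
    using rrefl_if_positive_image_inv_set[OF w \<alpha> \<open>\<alpha> \<notin> w ` N\<close>] finite_inv_set
    by (simp add: bij_betw_def card_subset_eq)
qed

end

theorem mainTheorem13: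
  fixes \<Phi> \<Delta> :: "'a::euclidean_space set" and w :: "'a \<Rightarrow> 'a" and \<alpha> :: 'a
  assumes "root_system \<Phi>" and "simple_system \<Phi> \<Delta>"
    and "w \<in> weyl_group \<Phi>" and "\<alpha> \<in> positive_roots \<Phi> \<Delta>"
    and "bruhat_less \<Phi> \<Delta> w (rrefl \<alpha> \<circ> w)"
    and "wlen \<Delta> (rrefl \<alpha> \<circ> w) = wlen \<Delta> w + 1"
  shows "image_mset (residue \<alpha>) (mset_set (inv_set \<Phi> \<Delta> (rrefl \<alpha> \<circ> w)))
       = image_mset (residue \<alpha>) (add_mset \<alpha> (image_mset (rrefl \<alpha>) (mset_set (inv_set \<Phi> \<Delta> w))))"
proof -
  interpret root_base \<Phi> \<Delta> using assms(1,2) by unfold_locales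
  let ?I = "inv_set \<Phi> \<Delta> w"
  have "rrefl \<alpha> \<circ> w \<in> W"
    using weyl_group.weyl_step assms(3,4) positive_roots_subset by blast
  then have card: "card (inv_set \<Phi> \<Delta> (rrefl \<alpha> \<circ> w)) = card ?I + 1"
    using assms(3,6) wlen_eq_card_inv_set by simp
  then have bij: "bij_betw (rrefl_if_positive \<alpha>) (insert \<alpha> ?I) (inv_set \<Phi> \<Delta> (rrefl \<alpha> \<circ> w))"
    using bij_betw_rrefl_if_positive_inv_set assms(3,4) by blast
  have "\<alpha> \<notin> ?I"
    using not_mem_image_negative_if_card_inv_set_rrefl[OF assms(3,4) card] by (simp add: inv_set_iff)
  have "image_mset (residue \<alpha>) (mset_set (inv_set \<Phi> \<Delta> (rrefl \<alpha> \<circ> w)))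
      = image_mset (residue \<alpha>) (mset_set (insert \<alpha> ?I))"
    by (rule image_mset_mset_set_bij_betw[OF bij]) simp
  also have "\<dots> = add_mset (residue \<alpha> \<alpha>) (image_mset (residue \<alpha>) (mset_set ?I))"
    using \<open>\<alpha> \<notin> ?I\<close> finite_inv_set by simp
  also have "\<dots> = image_mset (residue \<alpha>) (add_mset \<alpha> (image_mset (rrefl \<alpha>) (mset_set ?I)))"
    by (simp add: image_mset.compositionality comp_def)
  finally show ?thesis .
qed

end
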